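(* There exist absolute constants $C,c>0$ such that the following holds. Let $x$ be a random vector in $\{0,1\}^n$ whose coordinates are i.i.d. Bernoulli with parameter $p\in(0,1/2]$, and let $y$ be a random vector in $\{0,1\}^m$, independent of $x$, whose coordinates are i.i.d. Bernoulli with parameter $q\in(0,1)$. Let $(x_k,y_k)$, $k=1,\ldots,K$, be sampled independently from the distribution of $(x,y)$. Let $m_0\ge m$ be such that $Kq\ge C\log m_0$, $np\ge C\log(Km_0)$, and $Kq\log(Km_0)\le cn$. Then, with probability at least $1-3m/m_0$, there exists $F\in\mathcal{T}(n,m)$ such that $F(x_k)=y_k$ for all $k=1,\ldots,K$. Moreover, one may take $F=h(Wx-b)$ with $W:=\sum_{k=1}^K y_k\bar{x}_k^{\mathsf T}$, where $\bar x_k = x_k-\mathbb{E}x_k$, and $b$ any vector (fixed or dependent on the data) whose coordinates all satisfy $\frac{np}{8}<b(i)<\frac{np}{4}$.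
   Context: $\mathcal{T}(n,m)$ is the set of maps $F:\mathbb{R}^n\to\{0,1\}^m$ of the form $F(x)=h(Wx-b)$ with $W$ a real $m\times n$ matrix, $b\in\mathbb{R}^m$, and $h$ the Heaviside function applied componentwise ($h(t)=0$ for $t<0$, $h(t)=1$ for $t>0$). *)

theory Defs
  imports "HOL-Probability.Probability"
begin

text \<open>Heaviside function: only defined off 0 (h(t)=0 for t<0, h(t)=1 for t>0).
  Values in {0,1} are encoded as bool (False = 0, True = 1).\<close>
definition heaviside :: "real \<Rightarrow> bool option" where
  "heaviside t = (if t > 0 then Some True else if t < 0 then Some False else None)"

definition thr_map :: "nat \<Rightarrow> (nat \<Rightarrow> nat \<Rightarrow> real) \<Rightarrow> (nat \<Rightarrow> real) \<Rightarrow> (nat \<Rightarrow> bool) \<Rightarrow> nat \<Rightarrow> bool option" where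
  "thr_map n W b x i = heaviside ((\<Sum>j<n. W i j * of_bool (x j)) - b i)"

definition realizes :: "nat \<Rightarrow> nat \<Rightarrow> nat \<Rightarrow> (nat \<Rightarrow> nat \<Rightarrow> real) \<Rightarrow> (nat \<Rightarrow> real)
    \<Rightarrow> (nat \<Rightarrow> nat \<Rightarrow> bool) \<Rightarrow> (nat \<Rightarrow> nat \<Rightarrow> bool) \<Rightarrow> bool" where
  "realizes n m K W b xs ys \<longleftrightarrow> (\<forall>k<K. \<forall>i<m. thr_map n W b (xs k) i = Some (ys k i))"

definition hebb_W :: "nat \<Rightarrow> real \<Rightarrow> (nat \<Rightarrow> nat \<Rightarrow> bool) \<Rightarrow> (nat \<Rightarrow> nat \<Rightarrow> bool) \<Rightarrow> nat \<Rightarrow> nat \<Rightarrow> real" where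
  "hebb_W K p xs ys i j = (\<Sum>k<K. of_bool (ys k i) * (of_bool (xs k j) - p))"

text \<open>Joint law of the data: X (k,j) = x_k(j) iid Bernoulli(p), Y (k,i) = y_k(i) iid Bernoulli(q),
  all independent.\<close>
definition data_pmf :: "nat \<Rightarrow> nat \<Rightarrow> nat \<Rightarrow> real \<Rightarrow> real \<Rightarrow> ((nat \<times> nat \<Rightarrow> bool) \<times> (nat \<times> nat \<Rightarrow> bool)) pmf" where
  "data_pmf n m K p q = pair_pmf (Pi_pmf ({..<K} \<times> {..<n}) False (\<lambda>_. bernoulli_pmf p))
                                 (Pi_pmf ({..<K} \<times> {..<m}) False (\<lambda>_. bernoulli_pmf q))"

end

theory Submission
  imports Defs
begin

text \<open>
  The response of output i to input x_k splits as (W x_k)(i) = y_k(i) (1 - p) |x_k| + R_ik: the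
  signal of pattern k itself plus the crosstalk R_ik of the other patterns. Multiplicative Chernoff
  bounds keep |x_k| in (3np/4, 2np) and the number of patterns activating output i below 2Kq.
  Conditionally on y and x_k, the crosstalk is a centred sum of at most 4Kq np independent
  Bernoulli(p) entries of the other patterns, so a Chernoff bound with a tuned exponent gives
  |R_ik| < np/8 up to probability 2/(K m0)^2. On these events every threshold in (np/8, np/4)
  separates y_k(i) = 1 (response > np/4) from y_k(i) = 0 (response < np/8), and a union bound
  over outputs, patterns and pairs costs 3m/m0.
\<close>

lemma exp_le_one_plus_self_plus_square:
  fixes x :: real
  assumes "\<bar>x\<bar> \<le> 1"
  shows "exp x \<le> 1 + x + x\<^sup>2"
proof (cases "x \<ge> 0")
  case True
  then show ?thesis using exp_bound assms by auto
next
  case False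
  define y where "y = - x"
  have y: "0 \<le> y" "y \<le> 1" using False assms by (auto simp: y_def)
  have "1 \<le> (1 + y + y\<^sup>2 / 2) * (1 - y + y\<^sup>2)"
  proof -
    have "(1 + y + y\<^sup>2 / 2) * (1 - y + y\<^sup>2) = 1 + y^2/2 + y^3/2 + y^4/2"
      by (simp add: field_simps power2_eq_square power3_eq_cube power4_eq_xxxx)
    then show ?thesis using y by simp
  qed
  also have "\<dots> \<le> exp y * (1 - y + y\<^sup>2)"
    using exp_lower_Taylor_quadratic[of y] y zero_le_power2[of y]
    by (intro mult_right_mono) auto
  finally have "exp (-y) \<le> 1 - y + y\<^sup>2" by (simp add: exp_minus field_simps)
  then show ?thesis by (simp add: y_def)
qed

lemma nn_integral_bernoulli_centered_exp_le:
  fixes r l :: real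
  assumes r: "0 \<le> r" "r \<le> 1" and l: "\<bar>l\<bar> \<le> 1"
  shows "(\<integral>\<^sup>+b. ennreal (exp (l * (of_bool b - r))) \<partial>bernoulli_pmf r) \<le> ennreal (exp (r * l\<^sup>2))"
proof -
  have "(\<integral>\<^sup>+b. ennreal (exp (l * (of_bool b - r))) \<partial>bernoulli_pmf r)
      = ennreal (exp (l * (1 - r))) * r + ennreal (exp (l * (0 - r))) * (1 - r)"
    using r by simp
  also have "\<dots> = ennreal (exp (l * (1 - r)) * r + exp (l * (0 - r)) * (1 - r))"
    using r by (simp add: ennreal_mult ennreal_plus)
  also have "exp (l * (1 - r)) * r + exp (l * (0 - r)) * (1 - r) = exp (- l * r) * (1 - r + r * exp l)"
    by (simp add: algebra_simps flip: exp_add)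
  also have "exp (- l * r) * (1 - r + r * exp l) \<le> exp (r * l\<^sup>2)"
  proof -
    have "1 - r + r * exp l \<le> exp (r * (exp l - 1))"
      using exp_ge_add_one_self[of "r * (exp l - 1)"] by (simp add: algebra_simps)
    then have "exp (- l * r) * (1 - r + r * exp l) \<le> exp (- l * r) * exp (r * (exp l - 1))"
      by (rule mult_left_mono) simp
    also have "\<dots> = exp (r * (exp l - 1 - l))" by (simp add: algebra_simps flip: exp_add)
    also have "\<dots> \<le> exp (r * l\<^sup>2)"
      using exp_le_one_plus_self_plus_square[OF l] r(1) by (simp add: mult_left_mono)
    finally show ?thesis .
  qed
  finally show ?thesis by (blast intro: ennreal_leI)
qed

lemma nn_integral_Pi_pmf_bernoulli_exp_sum_le:
  assumes A: "finite A" and T: "T \<subseteq> A" and r: "0 \<le> r" "r \<le> 1" and l: "\<bar>l\<bar> \<le> 1"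
  shows "(\<integral>\<^sup>+f. ennreal (exp (l * (\<Sum>t\<in>T. of_bool (f t) - r))) \<partial>Pi_pmf A dflt (\<lambda>_. bernoulli_pmf r))
         \<le> ennreal (exp (real (card T) * r * l\<^sup>2))"
proof -
  define g where "g = (\<lambda>x b. if x \<in> T then ennreal (exp (l * (of_bool b - r))) else 1)"
  have prod_T: "(\<Prod>x\<in>A. if x \<in> T then c x else 1) = (\<Prod>x\<in>T. c x)" for c :: "_ \<Rightarrow> ennreal"
    using T by (simp add: prod.inter_filter[OF A, symmetric] Int_absorb1 Collect_conj_eq Int_commute)
  have "ennreal (exp (l * (\<Sum>t\<in>T. of_bool (f t) - r))) = (\<Prod>x\<in>A. g x (f x))" for f :: "_ \<Rightarrow> bool"
    using finite_subset[OF T A]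
    by (simp add: g_def prod_T exp_sum sum_distrib_left prod_ennreal)
  then have "(\<integral>\<^sup>+f. ennreal (exp (l * (\<Sum>t\<in>T. of_bool (f t) - r))) \<partial>Pi_pmf A dflt (\<lambda>_. bernoulli_pmf r))
      = (\<Prod>x\<in>A. nn_integral (bernoulli_pmf r) (g x))"
    by (simp add: nn_integral_prod_Pi_pmf[OF A])
  also have "\<dots> \<le> (\<Prod>x\<in>A. if x \<in> T then ennreal (exp (r * l\<^sup>2)) else 1)"
    using nn_integral_bernoulli_centered_exp_le[OF r l] r
    by (intro prod_mono_ennreal) (simp add: g_def flip: ennreal_plus)
  also have "\<dots> = ennreal (exp (real (card T) * r * l\<^sup>2))"
    by (simp add: prod_T ennreal_power flip: exp_of_nat_mult)
  finally show ?thesis .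
qed

text \<open>Chernoff's bound; a negative \<open>l\<close> gives the lower tail.\<close>
lemma prob_Pi_pmf_bernoulli_sum_ge:
  assumes A: "finite A" and T: "T \<subseteq> A" and r: "0 \<le> r" "r \<le> 1" and l: "\<bar>l\<bar> \<le> 1"
  shows "measure_pmf.prob (Pi_pmf A dflt (\<lambda>_. bernoulli_pmf r)) {f. a \<le> l * (\<Sum>t\<in>T. of_bool (f t) - r)}
         \<le> exp (real (card T) * r * l\<^sup>2 - a)"
proof -
  let ?M = "Pi_pmf A dflt (\<lambda>_. bernoulli_pmf r)"
  have "emeasure ?M {f. a \<le> l * (\<Sum>t\<in>T. of_bool (f t) - r)}
      \<le> ennreal (exp (- a)) * (\<integral>\<^sup>+f. ennreal (exp (l * (\<Sum>t\<in>T. of_bool (f t) - r))) \<partial>?M)"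
    using Chernoff_ineq_nn_integral_ge[of 1 UNIV ?M "\<lambda>f. l * (\<Sum>t\<in>T. of_bool (f t) - r)" a]
    by simp
  also have "\<dots> \<le> ennreal (exp (- a)) * ennreal (exp (real (card T) * r * l\<^sup>2))"
    by (intro mult_left_mono nn_integral_Pi_pmf_bernoulli_exp_sum_le[OF A T r l]) simp
  also have "\<dots> = ennreal (exp (real (card T) * r * l\<^sup>2 - a))"
    by (simp flip: ennreal_mult exp_add)
  finally show ?thesis by (simp add: measure_pmf.emeasure_eq_measure)
qed

lemma prob_Pi_pmf_bernoulli_abs_sum_ge:
  assumes A: "finite A" and T: "T \<subseteq> A" and r: "0 \<le> r" "r \<le> 1" and l: "0 \<le> l" "l \<le> 1"
  shows "measure_pmf.prob (Pi_pmf A dflt (\<lambda>_. bernoulli_pmf r)) {f. a \<le> \<bar>\<Sum>t\<in>T. of_bool (f t) - r\<bar>}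
         \<le> 2 * exp (real (card T) * r * l\<^sup>2 - l * a)"
proof -
  let ?M = "Pi_pmf A dflt (\<lambda>_. bernoulli_pmf r)" and ?S = "\<lambda>f. \<Sum>t\<in>T. of_bool (f t) - r"
  have "{f. a \<le> \<bar>?S f\<bar>} \<subseteq> {f. l * a \<le> l * ?S f} \<union> {f. l * a \<le> (- l) * ?S f}"
  proof
    fix f assume "f \<in> {f. a \<le> \<bar>?S f\<bar>}"
    then have "l * a \<le> l * \<bar>?S f\<bar>" using l by (simp add: mult_left_mono)
    then show "f \<in> {f. l * a \<le> l * ?S f} \<union> {f. l * a \<le> (- l) * ?S f}"
      by (cases "?S f \<ge> 0") auto
  qed
  then have "measure_pmf.prob ?M {f. a \<le> \<bar>?S f\<bar>}
      \<le> measure_pmf.prob ?M ({f. l * a \<le> l * ?S f} \<union> {f. l * a \<le> (- l) * ?S f})"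
    by (rule measure_pmf.finite_measure_mono) simp
  also have "\<dots> \<le> measure_pmf.prob ?M {f. l * a \<le> l * ?S f} + measure_pmf.prob ?M {f. l * a \<le> (- l) * ?S f}"
    by (rule measure_Un_le) simp_all
  also have "\<dots> \<le> exp (real (card T) * r * l\<^sup>2 - l * a) + exp (real (card T) * r * (- l)\<^sup>2 - l * a)"
    using l by (intro add_mono prob_Pi_pmf_bernoulli_sum_ge[OF A T r]) auto
  finally show ?thesis by simp
qed

lemma sum_of_bool_minus_eq_card:
  "finite T \<Longrightarrow> (\<Sum>t\<in>T. of_bool (f t) - r) = real (card {t\<in>T. f t}) - real (card T) * r"
  by (simp add: sum_subtractf Int_def conj_commute)

lemma prob_Pi_pmf_bernoulli_card_ge_twice:
  assumes A: "finite A" and T: "T \<subseteq> A" and r: "0 \<le> r" "r \<le> 1"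
  shows "measure_pmf.prob (Pi_pmf A dflt (\<lambda>_. bernoulli_pmf r)) {f. 2 * (real (card T) * r) \<le> card {t\<in>T. f t}}
         \<le> exp (- (real (card T) * r) / 4)"
proof -
  have "{f. 2 * (real (card T) * r) \<le> card {t\<in>T. f t}}
      \<subseteq> {f. real (card T) * r / 2 \<le> 1/2 * (\<Sum>t\<in>T. of_bool (f t) - r)}"
    using finite_subset[OF T A] by (auto simp: sum_of_bool_minus_eq_card algebra_simps)
  then have "measure_pmf.prob (Pi_pmf A dflt (\<lambda>_. bernoulli_pmf r)) {f. 2 * (real (card T) * r) \<le> card {t\<in>T. f t}}
      \<le> exp (real (card T) * r * (1/2)\<^sup>2 - real (card T) * r / 2)"
    by (rule order_trans[OF measure_pmf.finite_measure_mono prob_Pi_pmf_bernoulli_sum_ge[OF A T r]]) auto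
  then show ?thesis by (simp add: power2_eq_square algebra_simps)
qed

lemma prob_Pi_pmf_bernoulli_card_le_three_quarters:
  assumes A: "finite A" and T: "T \<subseteq> A" and r: "0 \<le> r" "r \<le> 1"
  shows "measure_pmf.prob (Pi_pmf A dflt (\<lambda>_. bernoulli_pmf r)) {f. card {t\<in>T. f t} \<le> 3/4 * (real (card T) * r)}
         \<le> exp (- (real (card T) * r) / 64)"
proof -
  have "{f. card {t\<in>T. f t} \<le> 3/4 * (real (card T) * r)}
      \<subseteq> {f. real (card T) * r / 32 \<le> -1/8 * (\<Sum>t\<in>T. of_bool (f t) - r)}"
    using finite_subset[OF T A] by (auto simp: sum_of_bool_minus_eq_card algebra_simps)
  then have "measure_pmf.prob (Pi_pmf A dflt (\<lambda>_. bernoulli_pmf r)) {f. card {t\<in>T. f t} \<le> 3/4 * (real (card T) * r)}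
      \<le> exp (real (card T) * r * (-1/8)\<^sup>2 - real (card T) * r / 32)"
    by (rule order_trans[OF measure_pmf.finite_measure_mono prob_Pi_pmf_bernoulli_sum_ge[OF A T r]]) auto
  then show ?thesis by (simp add: power2_eq_square algebra_simps)
qed

lemma prob_pair_pmf_fst:
  "measure_pmf.prob (pair_pmf A B) {z. P (fst z)} = measure_pmf.prob A {x. P x}"
  by (subst map_fst_pair_pmf[of A B, symmetric]) (simp add: vimage_def del: map_fst_pair_pmf)

lemma prob_pair_pmf_snd:
  "measure_pmf.prob (pair_pmf A B) {z. P (snd z)} = measure_pmf.prob B {y. P y}"
  by (subst map_snd_pair_pmf[of A B, symmetric]) (simp add: vimage_def del: map_snd_pair_pmf)

lemma prob_pair_pmf_le_if_fibres_le:
  assumes "\<And>x. measure_pmf.prob B {y. (x, y) \<in> S} \<le> b"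
  shows "measure_pmf.prob (pair_pmf A B) S \<le> b"
proof -
  have b: "0 \<le> b" using assms[of undefined] measure_nonneg order_trans by blast
  have "emeasure (pair_pmf A B) S = (\<integral>\<^sup>+x. emeasure B {y. (x, y) \<in> S} \<partial>A)"
    by (simp add: nn_integral_pair_pmf' flip: nn_integral_indicator)
       (simp add: indicator_def of_bool_def)
  also have "\<dots> \<le> (\<integral>\<^sup>+x. ennreal b \<partial>A)"
    using assms by (intro nn_integral_mono) (simp add: measure_pmf.emeasure_eq_measure ennreal_leI)
  finally show ?thesis using b by (simp add: measure_pmf.emeasure_eq_measure)
qed

lemma prob_UN_le_card_mult:
  assumes "finite I" "\<And>i. i \<in> I \<Longrightarrow> measure_pmf.prob M (A i) \<le> b"
  shows "measure_pmf.prob M (\<Union>i\<in>I. A i) \<le> real (card I) * b"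
proof -
  have "measure_pmf.prob M (\<Union>i\<in>I. A i) \<le> (\<Sum>i\<in>I. measure_pmf.prob M (A i))"
    using assms(1) by (rule measure_UNION_le) simp
  also have "\<dots> \<le> real (card I) * b"
    using sum_mono[of I _ "\<lambda>_. b"] assms(2) by simp
  finally show ?thesis .
qed

type_synonym bool_matrix = "nat \<times> nat \<Rightarrow> bool"

definition active_inputs :: "nat \<Rightarrow> bool_matrix \<Rightarrow> nat \<Rightarrow> nat" where
  "active_inputs n X k = card {j. j < n \<and> X (k, j)}"

definition output_load :: "nat \<Rightarrow> bool_matrix \<Rightarrow> nat \<Rightarrow> nat" where
  "output_load K Y i = card {l. l < K \<and> Y (l, i)}"

definition crosstalk :: "nat \<Rightarrow> nat \<Rightarrow> real \<Rightarrow> bool_matrix \<Rightarrow> bool_matrix \<Rightarrow> nat \<Rightarrow> nat \<Rightarrow> real" where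
  "crosstalk n K p X Y i k =
     (\<Sum>l\<in>{..<K} - {k}. of_bool (Y (l, i)) * (\<Sum>j<n. of_bool (X (k, j)) * (of_bool (X (l, j)) - p)))"

definition signal_dominates_crosstalk :: "nat \<Rightarrow> nat \<Rightarrow> nat \<Rightarrow> real \<Rightarrow> bool_matrix \<Rightarrow> bool_matrix \<Rightarrow> bool" where
  "signal_dominates_crosstalk n m K p X Y \<longleftrightarrow>
     (\<forall>k<K. 3/4 * (real n * p) < real (active_inputs n X k)) \<and>
     (\<forall>i<m. \<forall>k<K. \<bar>crosstalk n K p X Y i k\<bar> < real n * p / 8)"

lemma hebb_W_response_eq:
  assumes "k < K"
  shows "(\<Sum>j<n. hebb_W K p (\<lambda>k j. X (k, j)) (\<lambda>k i. Y (k, i)) i j * of_bool (X (k, j)))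
    = of_bool (Y (k, i)) * (1 - p) * real (active_inputs n X k) + crosstalk n K p X Y i k"
proof -
  have "(\<Sum>j<n. hebb_W K p (\<lambda>k j. X (k, j)) (\<lambda>k i. Y (k, i)) i j * of_bool (X (k, j)))
      = (\<Sum>l<K. of_bool (Y (l, i)) * (\<Sum>j<n. of_bool (X (k, j)) * (of_bool (X (l, j)) - p)))"
    unfolding hebb_W_def sum_distrib_right sum_distrib_left
    by (subst sum.swap) (simp add: algebra_simps)
  also have "\<dots> = of_bool (Y (k, i)) * (\<Sum>j<n. of_bool (X (k, j)) * (of_bool (X (k, j)) - p))
      + crosstalk n K p X Y i k"
    unfolding crosstalk_def using assms by (subst sum.remove[of _ k]) auto
  also have "(\<Sum>j<n. of_bool (X (k, j)) * (of_bool (X (k, j)) - p)) = (\<Sum>j<n. (1 - p) * of_bool (X (k, j)))"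
    by (rule sum.cong) auto
  also have "\<dots> = (1 - p) * real (active_inputs n X k)"
    by (simp add: active_inputs_def Int_def flip: sum_distrib_left)
  finally show ?thesis by (simp add: mult.assoc)
qed

lemma crosstalk_eq_sum:
  "crosstalk n K p X Y i k
     = (\<Sum>t \<in> {l \<in> {..<K} - {k}. Y (l, i)} \<times> {j. j < n \<and> X (k, j)}. of_bool (X t) - p)"
proof -
  have "crosstalk n K p X Y i k
      = (\<Sum>t\<in>({..<K} - {k}) \<times> {..<n}. of_bool (Y (fst t, i) \<and> X (k, snd t)) * (of_bool (X t) - p))"
    unfolding crosstalk_def sum_distrib_left sum.cartesian_product
    by (intro sum.cong refl) auto
  also have "\<dots> = (\<Sum>t \<in> {l \<in> {..<K} - {k}. Y (l, i)} \<times> {j. j < n \<and> X (k, j)}. of_bool (X t) - p)"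
    by (rule sum.mono_neutral_cong_right) auto
  finally show ?thesis .
qed

lemma realizes_hebb_W:
  assumes p: "0 \<le> p" "p \<le> 1/2"
    and dominates: "signal_dominates_crosstalk n m K p X Y"
    and b: "\<forall>i<m. real n * p / 8 < b i \<and> b i < real n * p / 4"
  shows "realizes n m K (hebb_W K p (\<lambda>k j. X (k, j)) (\<lambda>k i. Y (k, i))) b (\<lambda>k j. X (k, j)) (\<lambda>k i. Y (k, i))"
  unfolding realizes_def thr_map_def
proof (intro allI impI)
  fix k i assume k: "k < K" and i: "i < m"
  have "3/4 * (real n * p) < real (active_inputs n X k)"
    using dominates k by (simp add: signal_dominates_crosstalk_def)
  then have "3/8 * (real n * p) < 1/2 * real (active_inputs n X k)" by linarith
  also have "\<dots> \<le> (1 - p) * real (active_inputs n X k)"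
    using p by (intro mult_right_mono) auto
  finally have "3/8 * (real n * p) < (1 - p) * real (active_inputs n X k)" .
  moreover have "\<bar>crosstalk n K p X Y i k\<bar> < real n * p / 8" "real n * p / 8 < b i" "b i < real n * p / 4"
    using dominates b i k by (auto simp: signal_dominates_crosstalk_def)
  ultimately show "heaviside ((\<Sum>j<n. hebb_W K p (\<lambda>k j. X (k, j)) (\<lambda>k i. Y (k, i)) i j * of_bool (X (k, j))) - b i)
      = Some (Y (k, i))"
    unfolding hebb_W_response_eq[OF k] by (cases "Y (k, i)") (auto simp: heaviside_def abs_less_iff)
qed

lemma prob_output_load_ge:
  assumes q: "0 \<le> q" "q \<le> 1" and i: "i < m"
  shows "measure_pmf.prob (data_pmf n m K p q) {z. 2 * (real K * q) \<le> real (output_load K (snd z) i)}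
         \<le> exp (- (real K * q) / 4)"
proof -
  have "output_load K Y i = card {t \<in> {..<K} \<times> {i}. Y t}" for Y
    unfolding output_load_def
    by (rule bij_betw_same_card[of "\<lambda>l. (l, i)"]) (auto simp: bij_betw_def inj_on_def image_iff)
  then have "measure_pmf.prob (data_pmf n m K p q) {z. 2 * (real K * q) \<le> real (output_load K (snd z) i)}
      = measure_pmf.prob (Pi_pmf ({..<K} \<times> {..<m}) False (\<lambda>_. bernoulli_pmf q))
          {Y. 2 * (real K * q) \<le> real (card {t \<in> {..<K} \<times> {i}. Y t})}"
    unfolding data_pmf_def by (simp only:) (rule prob_pair_pmf_snd)
  also have "\<dots> \<le> exp (- (real K * q) / 4)"
    using prob_Pi_pmf_bernoulli_card_ge_twice[of "{..<K} \<times> {..<m}" "{..<K} \<times> {i}" q False] q i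
    by (simp add: card_cartesian_product subset_iff)
  finally show ?thesis .
qed

lemma active_inputs_eq_card: "active_inputs n X k = card {t \<in> {k} \<times> {..<n}. X t}"
  unfolding active_inputs_def
  by (rule bij_betw_same_card[of "\<lambda>j. (k, j)"]) (auto simp: bij_betw_def inj_on_def image_iff)

lemma prob_active_inputs_ge:
  assumes p: "0 \<le> p" "p \<le> 1" and k: "k < K"
  shows "measure_pmf.prob (data_pmf n m K p q) {z. 2 * (real n * p) \<le> real (active_inputs n (fst z) k)}
         \<le> exp (- (real n * p) / 4)"
proof -
  have "measure_pmf.prob (data_pmf n m K p q) {z. 2 * (real n * p) \<le> real (active_inputs n (fst z) k)}
      = measure_pmf.prob (Pi_pmf ({..<K} \<times> {..<n}) False (\<lambda>_. bernoulli_pmf p))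
          {X. 2 * (real n * p) \<le> real (card {t \<in> {k} \<times> {..<n}. X t})}"
    unfolding data_pmf_def active_inputs_eq_card by (rule prob_pair_pmf_fst)
  also have "\<dots> \<le> exp (- (real n * p) / 4)"
    using prob_Pi_pmf_bernoulli_card_ge_twice[of "{..<K} \<times> {..<n}" "{k} \<times> {..<n}" p False] p k
    by (simp add: card_cartesian_product subset_iff)
  finally show ?thesis .
qed

lemma prob_active_inputs_le:
  assumes p: "0 \<le> p" "p \<le> 1" and k: "k < K"
  shows "measure_pmf.prob (data_pmf n m K p q) {z. real (active_inputs n (fst z) k) \<le> 3/4 * (real n * p)}
         \<le> exp (- (real n * p) / 64)"
proof -
  have "measure_pmf.prob (data_pmf n m K p q) {z. real (active_inputs n (fst z) k) \<le> 3/4 * (real n * p)}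
      = measure_pmf.prob (Pi_pmf ({..<K} \<times> {..<n}) False (\<lambda>_. bernoulli_pmf p))
          {X. real (card {t \<in> {k} \<times> {..<n}. X t}) \<le> 3/4 * (real n * p)}"
    unfolding data_pmf_def active_inputs_eq_card by (rule prob_pair_pmf_fst)
  also have "\<dots> \<le> exp (- (real n * p) / 64)"
    using prob_Pi_pmf_bernoulli_card_le_three_quarters[of "{..<K} \<times> {..<n}" "{k} \<times> {..<n}" p False] p k
    by (simp add: card_cartesian_product subset_iff)
  finally show ?thesis .
qed

lemma prob_crosstalk_ge_given_row:
  fixes M N a l p :: real and f Y :: bool_matrix and k n :: nat
  assumes p: "0 \<le> p" "p \<le> 1" and l: "0 \<le> l" "l \<le> 1" and MN: "0 \<le> M" "0 \<le> N"
  defines "X \<equiv> \<lambda>g t. if t \<in> {k} \<times> {..<n} then f t else g t"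
  shows "measure_pmf.prob (Pi_pmf (({..<K} - {k}) \<times> {..<n}) False (\<lambda>_. bernoulli_pmf p))
     {g. real (output_load K Y i) \<le> M \<and> real (active_inputs n (X g) k) \<le> N \<and>
         a \<le> \<bar>crosstalk n K p (X g) Y i k\<bar>}
     \<le> 2 * exp (M * N * p * l\<^sup>2 - l * a)"
    (is "measure_pmf.prob ?P ?E \<le> _")
proof -
  have active: "active_inputs n (X g) k = active_inputs n f k" for g
    unfolding active_inputs_def X_def by (auto intro!: arg_cong[where f = card])
  show ?thesis
  proof (cases "real (output_load K Y i) \<le> M \<and> real (active_inputs n f k) \<le> N")
    case False
    then have "?E = {}" by (auto simp: active)
    then show ?thesis by (simp only:) simp
  next
    case True
    define T where "T = {l \<in> {..<K} - {k}. Y (l, i)} \<times> {j. j < n \<and> f (k, j)}"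
    have "crosstalk n K p (X g) Y i k = (\<Sum>t\<in>T. of_bool (g t) - p)" for g
      unfolding crosstalk_eq_sum T_def by (intro sum.cong) (auto simp: X_def)
    then have "measure_pmf.prob ?P ?E \<le> measure_pmf.prob ?P {g. a \<le> \<bar>\<Sum>t\<in>T. of_bool (g t) - p\<bar>}"
      by (intro measure_pmf.finite_measure_mono) auto
    also have "\<dots> \<le> 2 * exp (real (card T) * p * l\<^sup>2 - l * a)"
      by (rule prob_Pi_pmf_bernoulli_abs_sum_ge[OF _ _ p l]) (auto simp: T_def)
    also have "\<dots> \<le> 2 * exp (M * N * p * l\<^sup>2 - l * a)"
    proof -
      have "card {l \<in> {..<K} - {k}. Y (l, i)} \<le> output_load K Y i"
        unfolding output_load_def by (rule card_mono) auto
      then have S: "real (card {l \<in> {..<K} - {k}. Y (l, i)}) \<le> M" using True by linarith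
      have J: "real (card {j. j < n \<and> f (k, j)}) \<le> N" using True by (simp add: active_inputs_def)
      have "real (card T) \<le> M * N"
        unfolding T_def card_cartesian_product of_nat_mult using MN by (intro mult_mono[OF S J]) auto
      then have "real (card T) * p * l\<^sup>2 \<le> M * N * p * l\<^sup>2"
        using p by (intro mult_right_mono) auto
      then show ?thesis by simp
    qed
    finally show ?thesis .
  qed
qed

lemma prob_crosstalk_ge:
  fixes M N a l p :: real
  assumes k: "k < K" and p: "0 \<le> p" "p \<le> 1" and l: "0 \<le> l" "l \<le> 1" and MN: "0 \<le> M" "0 \<le> N"
  shows "measure_pmf.prob (data_pmf n m K p q)
     {z. real (output_load K (snd z) i) \<le> M \<and> real (active_inputs n (fst z) k) \<le> N \<and>
         a \<le> \<bar>crosstalk n K p (fst z) (snd z) i k\<bar>}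
     \<le> 2 * exp (M * N * p * l\<^sup>2 - l * a)"
proof -
  define merge :: "bool_matrix \<times> bool_matrix \<Rightarrow> bool_matrix"
    where "merge = (\<lambda>(f, g) t. if t \<in> {k} \<times> {..<n} then f t else g t)"
  define E where "E = {(X, Y). real (output_load K Y i) \<le> M \<and> real (active_inputs n X k) \<le> N \<and>
                                 a \<le> \<bar>crosstalk n K p X Y i k\<bar>}"
  have "{..<K} \<times> {..<n} = {k} \<times> {..<n} \<union> ({..<K} - {k}) \<times> {..<n}" using k by auto
  then have "Pi_pmf ({..<K} \<times> {..<n}) False (\<lambda>_. bernoulli_pmf p)
      = map_pmf merge (pair_pmf (Pi_pmf ({k} \<times> {..<n}) False (\<lambda>_. bernoulli_pmf p))
                                (Pi_pmf (({..<K} - {k}) \<times> {..<n}) False (\<lambda>_. bernoulli_pmf p)))"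
    unfolding merge_def by (simp only:) (rule Pi_pmf_union; auto)
  moreover have "measure_pmf.prob (Pi_pmf (({..<K} - {k}) \<times> {..<n}) False (\<lambda>_. bernoulli_pmf p))
      {g. (merge (f, g), Y) \<in> E} \<le> 2 * exp (M * N * p * l\<^sup>2 - l * a)" for f Y
    using prob_crosstalk_ge_given_row[OF p l MN, where f = f and Y = Y and K = K and i = i and a = a]
    by (simp add: E_def merge_def)
  ultimately have "measure_pmf.prob (Pi_pmf ({..<K} \<times> {..<n}) False (\<lambda>_. bernoulli_pmf p)) {X. (X, Y) \<in> E}
      \<le> 2 * exp (M * N * p * l\<^sup>2 - l * a)" for Y
    by (simp add: vimage_def prob_pair_pmf_le_if_fibres_le)
  then have "measure_pmf.prob (data_pmf n m K p q) E \<le> 2 * exp (M * N * p * l\<^sup>2 - l * a)"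
    unfolding data_pmf_def by (subst pair_commute_pmf) (simp add: vimage_def prob_pair_pmf_le_if_fibres_le)
  then show ?thesis by (simp add: E_def case_prod_unfold)
qed

lemma not_signal_dominates_crosstalk_cases:
  fixes M N :: real
  assumes "\<not> signal_dominates_crosstalk n m K p X Y"
  shows "(\<exists>i<m. M \<le> real (output_load K Y i)) \<or>
    (\<exists>k<K. N \<le> real (active_inputs n X k) \<or> real (active_inputs n X k) \<le> 3/4 * (real n * p)) \<or>
    (\<exists>i<m. \<exists>k<K. real (output_load K Y i) \<le> M \<and> real (active_inputs n X k) \<le> N \<and>
                 real n * p / 8 \<le> \<bar>crosstalk n K p X Y i k\<bar>)"
proof -
  from assms consider k where "k < K" "real (active_inputs n X k) \<le> 3/4 * (real n * p)"
    | i k where "i < m" "k < K" "real n * p / 8 \<le> \<bar>crosstalk n K p X Y i k\<bar>"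
    by (auto simp: signal_dominates_crosstalk_def not_less)
  then show ?thesis
  proof cases
    case (2 i k)
    then show ?thesis
      by (cases "M \<le> real (output_load K Y i)"; cases "N \<le> real (active_inputs n X k)") auto
  qed auto
qed

lemma prob_not_signal_dominates_crosstalk_le:
  fixes l p q :: real
  assumes p: "0 \<le> p" "p \<le> 1" and q: "0 \<le> q" "q \<le> 1" and l: "0 \<le> l" "l \<le> 1"
  shows "measure_pmf.prob (data_pmf n m K p q)
     {z. \<not> signal_dominates_crosstalk n m K p (fst z) (snd z)}
   \<le> real m * exp (- (real K * q) / 4) + real K * (exp (- (real n * p) / 4) + exp (- (real n * p) / 64))
     + real (m * K) * (2 * exp (2 * (real K * q) * (2 * (real n * p)) * p * l\<^sup>2 - l * (real n * p / 8)))"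
    (is "measure_pmf.prob ?D _ \<le> real m * ?a + real K * (?b + ?c) + real (m * K) * ?d")
proof -
  define Load :: "(bool_matrix \<times> bool_matrix) set"
    where "Load = (\<Union>i\<in>{..<m}. {z. 2 * (real K * q) \<le> real (output_load K (snd z) i)})"
  define Active :: "(bool_matrix \<times> bool_matrix) set"
    where "Active = (\<Union>k\<in>{..<K}. {z. 2 * (real n * p) \<le> real (active_inputs n (fst z) k)} \<union>
                                  {z. real (active_inputs n (fst z) k) \<le> 3/4 * (real n * p)})"
  define Cross :: "(bool_matrix \<times> bool_matrix) set"
    where "Cross = (\<Union>(i, k)\<in>{..<m} \<times> {..<K}.
      {z. real (output_load K (snd z) i) \<le> 2 * (real K * q) \<and> real (active_inputs n (fst z) k) \<le> 2 * (real n * p) \<and>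
          real n * p / 8 \<le> \<bar>crosstalk n K p (fst z) (snd z) i k\<bar>})"
  have "{z. \<not> signal_dominates_crosstalk n m K p (fst z) (snd z)} \<subseteq> Load \<union> Active \<union> Cross"
    using not_signal_dominates_crosstalk_cases[where M = "2 * (real K * q)" and N = "2 * (real n * p)"]
    unfolding Load_def Active_def Cross_def by fastforce
  then have "measure_pmf.prob ?D {z. \<not> signal_dominates_crosstalk n m K p (fst z) (snd z)}
      \<le> measure_pmf.prob ?D (Load \<union> Active \<union> Cross)"
    by (rule measure_pmf.finite_measure_mono) simp
  also have "\<dots> \<le> measure_pmf.prob ?D Load + measure_pmf.prob ?D Active + measure_pmf.prob ?D Cross"
    by (intro order_trans[OF measure_Un_le] add_mono) auto
  also have "\<dots> \<le> real (card {..<m}) * ?a + real (card {..<K}) * (?b + ?c) + real (card ({..<m} \<times> {..<K})) * ?d"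
  proof (intro add_mono)
    show "measure_pmf.prob ?D Load \<le> real (card {..<m}) * ?a"
      unfolding Load_def using prob_output_load_ge[OF q] by (intro prob_UN_le_card_mult) auto
    show "measure_pmf.prob ?D Active \<le> real (card {..<K}) * (?b + ?c)"
      unfolding Active_def using prob_active_inputs_ge[OF p] prob_active_inputs_le[OF p]
      by (intro prob_UN_le_card_mult order_trans[OF measure_Un_le] add_mono) auto
    show "measure_pmf.prob ?D Cross \<le> real (card ({..<m} \<times> {..<K})) * ?d"
      unfolding Cross_def
    proof (rule prob_UN_le_card_mult)
      fix ik assume "ik \<in> {..<m} \<times> {..<K}"
      then show "measure_pmf.prob ?D (case ik of (i, k) \<Rightarrow> {z. real (output_load K (snd z) i) \<le> 2 * (real K * q) \<and>
          real (active_inputs n (fst z) k) \<le> 2 * (real n * p) \<and>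
          real n * p / 8 \<le> \<bar>crosstalk n K p (fst z) (snd z) i k\<bar>}) \<le> ?d"
        using q p prob_crosstalk_ge[where M = "2 * (real K * q)" and N = "2 * (real n * p)"
            and a = "real n * p / 8" and l = l and p = p, OF _ p l]
        by (auto split: prod.splits)
    qed simp
  qed
  finally show ?thesis by (simp add: card_cartesian_product)
qed

lemma exists_crosstalk_chernoff_parameter:
  fixes load n p L :: real
  assumes load: "0 < load" and p: "0 < p" and L: "0 \<le> L"
    and activity: "128 * L \<le> n * p" and sparse: "2048 * load * L \<le> n"
  shows "\<exists>l. 0 \<le> l \<and> l \<le> 1 \<and> 2 * load * (2 * (n * p)) * p * l\<^sup>2 - l * (n * p / 8) \<le> - (2 * L)"
proof (intro exI conjI)
  define l where "l = min 1 (1 / (64 * load * p))"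
  show l0: "0 \<le> l" and "l \<le> 1" using load p by (auto simp: l_def)
  have "64 * load * p * l \<le> 1"
    using load p by (auto simp: l_def min_def field_simps)
  then have "2 * load * (2 * (n * p)) * p * l\<^sup>2 \<le> l * (n * p) / 16"
    using mult_right_mono[of "64 * load * p * l" 1 "l * (n * p) / 16"] l0 activity L
    by (simp add: power2_eq_square algebra_simps)
  moreover have "2 * L \<le> l * (n * p) / 16"
  proof (cases "64 * load * p \<le> 1")
    case True
    then have "l = 1" using load p by (simp add: l_def field_simps)
    then show ?thesis using activity L by simp
  next
    case False
    then have "l * (n * p) / 16 = n / (1024 * load)" using load p by (simp add: l_def field_simps)
    moreover have "2 * L \<le> n / (1024 * load)" using sparse load by (simp add: field_simps)
    ultimately show ?thesis by simp
  qed
  ultimately show "2 * load * (2 * (n * p)) * p * l\<^sup>2 - l * (n * p / 8) \<le> - (2 * L)" by simp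
qed

lemma hebb_failure_bound_le:
  fixes p q m0 :: real
  assumes p: "0 < p" and q: "0 < q" and m: "1 \<le> m" "3 * real m < m0"
    and load: "128 * ln m0 \<le> real K * q" and activity: "128 * ln (real K * m0) \<le> real n * p"
    and sparse: "real K * q * ln (real K * m0) \<le> 1/2048 * real n"
  shows "\<exists>l. 0 \<le> l \<and> l \<le> 1 \<and>
    real m * exp (- (real K * q) / 4) + real K * (exp (- (real n * p) / 4) + exp (- (real n * p) / 64))
    + real (m * K) * (2 * exp (2 * (real K * q) * (2 * (real n * p)) * p * l\<^sup>2 - l * (real n * p / 8)))
    \<le> 3 * real m / m0"
proof -
  have m0: "3 < m0" and ln_m0: "0 < ln m0" using m by auto
  then have K: "1 \<le> real K" using load q by (cases K) auto
  define L where "L = ln (real K * m0)"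
  have "ln m0 \<le> L" using K m0 by (simp add: L_def)
  then obtain l where l: "0 \<le> l" "l \<le> 1"
    and exponent: "2 * (real K * q) * (2 * (real n * p)) * p * l\<^sup>2 - l * (real n * p / 8) \<le> - (2 * L)"
    using exists_crosstalk_chernoff_parameter[of "real K * q" p L "real n"] K q p ln_m0 activity sparse
    by (auto simp: L_def algebra_simps)
  define e where "e = exp (- (2 * L))"
  have "exp (- (real K * q) / 4) \<le> exp (- ln m0)" using load ln_m0 by simp
  then have load_tail: "exp (- (real K * q) / 4) \<le> 1 / m0" using m0 by (simp add: exp_minus field_simps)
  have activity_tails: "exp (- (real n * p) / 4) \<le> e" "exp (- (real n * p) / 64) \<le> e"
    using activity ln_m0 \<open>ln m0 \<le> L\<close> by (simp_all add: e_def L_def)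
  have "exp (2 * L) = (real K * m0)\<^sup>2"
    using exp_of_nat_mult[of 2 L] K m0 by (simp add: L_def)
  then have "real K * (1 + real m) * e = (1 + real m) / (real K * m0) / m0"
    using K m0 by (simp add: e_def exp_minus field_simps power2_eq_square)
  also have "\<dots> \<le> real m * (real K * m0) / (real K * m0) / m0"
  proof (intro divide_right_mono)
    have "1 + real m \<le> real m * 3" using m by simp
    also have "\<dots> \<le> real m * (real K * m0)"
      using K m0 mult_mono[of 1 "real K" 3 m0] by (intro mult_left_mono) auto
    finally show "1 + real m \<le> real m * (real K * m0)" .
  qed (use K m0 in auto)
  also have "\<dots> = real m / m0" using K m0 by simp
  finally have small: "real K * (1 + real m) * e \<le> real m / m0" .
  have "real m * exp (- (real K * q) / 4) + real K * (exp (- (real n * p) / 4) + exp (- (real n * p) / 64))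
      + real (m * K) * (2 * exp (2 * (real K * q) * (2 * (real n * p)) * p * l\<^sup>2 - l * (real n * p / 8)))
      \<le> real m * (1 / m0) + real K * (e + e) + real (m * K) * (2 * e)"
    using load_tail activity_tails exponent by (intro add_mono mult_left_mono) (auto simp: e_def)
  also have "\<dots> = real m / m0 + 2 * (real K * (1 + real m) * e)" by (simp add: algebra_simps)
  also have "\<dots> \<le> 3 * real m / m0" using small by simp
  finally show ?thesis using l by blast
qed

lemma prob_hebb_W_realizes_ge:
  fixes p q m0 :: real
  assumes p: "0 < p" "p \<le> 1/2" and q: "0 < q" "q < 1" and m: "1 \<le> m" "3 * real m < m0"
    and load: "128 * ln m0 \<le> real K * q" and activity: "128 * ln (real K * m0) \<le> real n * p"
    and sparse: "real K * q * ln (real K * m0) \<le> 1/2048 * real n"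
  shows "1 - 3 * real m / m0 \<le> measure_pmf.prob (data_pmf n m K p q)
     {(X, Y). (\<exists>W b. realizes n m K W b (\<lambda>k j. X (k, j)) (\<lambda>k i. Y (k, i))) \<and>
              (\<forall>b. (\<forall>i<m. real n * p / 8 < b i \<and> b i < real n * p / 4) \<longrightarrow>
                   realizes n m K (hebb_W K p (\<lambda>k j. X (k, j)) (\<lambda>k i. Y (k, i))) b
                     (\<lambda>k j. X (k, j)) (\<lambda>k i. Y (k, i)))}"
    (is "_ \<le> measure_pmf.prob ?D ?E")
proof -
  define Good where "Good = {z. signal_dominates_crosstalk n m K p (fst z) (snd z)}"
  obtain l where "0 \<le> l" "l \<le> 1" and "real m * exp (- (real K * q) / 4)
      + real K * (exp (- (real n * p) / 4) + exp (- (real n * p) / 64))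
      + real (m * K) * (2 * exp (2 * (real K * q) * (2 * (real n * p)) * p * l\<^sup>2 - l * (real n * p / 8)))
      \<le> 3 * real m / m0"
    using hebb_failure_bound_le[OF p(1) q(1) m load activity sparse] by blast
  then have "measure_pmf.prob ?D (UNIV - Good) \<le> 3 * real m / m0"
    using prob_not_signal_dominates_crosstalk_le[of p q l n m K] p q by (simp add: Good_def set_diff_eq)
  moreover have "0 < real n * p"
  proof -
    have "1 \<le> real K" using load q m by (cases K) auto
    then have "1 * m0 \<le> real K * m0" using m by (intro mult_right_mono) auto
    then have "0 < ln (real K * m0)" using m by (intro ln_gt_zero) linarith
    then show ?thesis using activity by linarith
  qed
  have "z \<in> ?E" if "z \<in> Good" for z
  proof -
    obtain X Y where z: "z = (X, Y)" by (cases z)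
    have hebb: "realizes n m K (hebb_W K p (\<lambda>k j. X (k, j)) (\<lambda>k i. Y (k, i))) b (\<lambda>k j. X (k, j)) (\<lambda>k i. Y (k, i))"
      if "\<forall>i<m. real n * p / 8 < b i \<and> b i < real n * p / 4" for b
      using \<open>z \<in> Good\<close> p that unfolding z Good_def by (intro realizes_hebb_W) auto
    have "\<forall>i<m. real n * p / 8 < 3/16 * (real n * p) \<and> 3/16 * (real n * p) < real n * p / 4"
      using \<open>0 < real n * p\<close> by (simp add: algebra_simps)
    then show ?thesis unfolding z using hebb hebb[of "\<lambda>_. 3/16 * (real n * p)"] by blast
  qed
  then have "Good \<subseteq> ?E" by blast
  then have "measure_pmf.prob ?D Good \<le> measure_pmf.prob ?D ?E"
    by (rule measure_pmf.finite_measure_mono) simp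
  ultimately show ?thesis using measure_pmf.prob_compl[of Good ?D] by simp
qed

theorem theorem7p2:
  shows "\<exists>C c :: real. C > 0 \<and> c > 0 \<and>
    (\<forall>(n::nat) (m::nat) (K::nat) (p::real) (q::real) (m0::real).
       0 < p \<and> p \<le> 1/2 \<and> 0 < q \<and> q < 1 \<and> real m \<le> m0 \<and>
       real K * q \<ge> C * ln m0 \<and>
       real n * p \<ge> C * ln (real K * m0) \<and>
       real K * q * ln (real K * m0) \<le> c * real n
       \<longrightarrow>
       measure_pmf.prob (data_pmf n m K p q)
         {(X, Y). (\<exists>W b. realizes n m K W b (\<lambda>k j. X (k, j)) (\<lambda>k i. Y (k, i))) \<and>
                  (\<forall>b. (\<forall>i<m. real n * p / 8 < b i \<and> b i < real n * p / 4) \<longrightarrow>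
                       realizes n m K (hebb_W K p (\<lambda>k j. X (k, j)) (\<lambda>k i. Y (k, i))) b
                         (\<lambda>k j. X (k, j)) (\<lambda>k i. Y (k, i)))}
       \<ge> 1 - 3 * real m / m0)"
proof (rule exI[of _ 128], rule exI[of _ "1/2048"], intro conjI allI impI)
  fix n m K :: nat and p q m0 :: real
  assume H: "0 < p \<and> p \<le> 1/2 \<and> 0 < q \<and> q < 1 \<and> real m \<le> m0 \<and> real K * q \<ge> 128 * ln m0 \<and>
    real n * p \<ge> 128 * ln (real K * m0) \<and> real K * q * ln (real K * m0) \<le> 1/2048 * real n"
  consider "m = 0" | "0 < m" "m0 \<le> 3 * real m" | "1 \<le> m" "3 * real m < m0" by linarith
  then show "1 - 3 * real m / m0 \<le> measure_pmf.prob (data_pmf n m K p q)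
         {(X, Y). (\<exists>W b. realizes n m K W b (\<lambda>k j. X (k, j)) (\<lambda>k i. Y (k, i))) \<and>
                  (\<forall>b. (\<forall>i<m. real n * p / 8 < b i \<and> b i < real n * p / 4) \<longrightarrow>
                       realizes n m K (hebb_W K p (\<lambda>k j. X (k, j)) (\<lambda>k i. Y (k, i))) b
                         (\<lambda>k j. X (k, j)) (\<lambda>k i. Y (k, i)))}"
  proof cases
    case 1
    then show ?thesis by (simp add: realizes_def)
  next
    case 2
    then have "1 - 3 * real m / m0 \<le> 0" using H by simp
    then show ?thesis using measure_nonneg order_trans by blast
  next
    case 3
    then show ?thesis using H by (intro prob_hebb_W_realizes_ge) auto
  qed
qed simp_all

end
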